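(* Let $\eta\in[0,2/\pi]$. There exist a probability space $(\Lambda,\mu)$ and response functions $p_A(a|\varphi,\lambda)$, $p_B(b|\boldsymbol y,\lambda)$ such that for all $\varphi\in[0,2\pi)$, all unit vectors $\boldsymbol y\in\mathbb R^3$, all $a\in\{+1,-1\}$ and $b\in\{+1,-1,\varnothing\}$, $$\langle\Phi^+|\mathrm A_{a|\varphi}\otimes\mathrm B_{b|\boldsymbol y}|\Phi^+\rangle=\int_\Lambda p_A(a|\varphi,\lambda)\,p_B(b|\boldsymbol y,\lambda)\,d\mu(\lambda).$$ That is, the lossy correlations of a maximally entangled two-qubit state with Alice's projective measurements restricted to the $X$–$Z$ plane and Bob's arbitrary projective measurements of efficiency $\eta\le 2/\pi$ admit a local hidden variable model.
   Context: $|\Phi^+\rangle=\frac1{\sqrt2}(|00\rangle+|11\rangle)$; $Z,X$ and $\boldsymbol\sigma=(X,Y,Z)$ Pauli matrices. Alice: $A_\varphi=\cos\varphi\,Z+\sin\varphi\,X$, $\mathrm A_{a|\varphi}=\frac12(I+aA_\varphi)$. Bob with efficiency $\eta$: $\mathrm B_{b|\boldsymbol y}=\frac\eta2(I+b\,\boldsymbol y\cdot\boldsymbol\sigma)$ for $b=\pm1$ and $\mathrm B_{\varnothing|\boldsymbol y}=(1-\eta)I$. Response functions are measurable conditional probability distributions. *)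

theory Defs
  imports "HOL-Probability.Probability"
begin

text \<open>2x2 complex matrices are represented as functions nat => nat => complex,
  with indices ranging over {0,1} (0 ~ |0>, 1 ~ |1>).\<close>

type_synonym cmat2 = "nat \<Rightarrow> nat \<Rightarrow> complex"

definition idm :: cmat2 where
  "idm i j = (if i = j then 1 else 0)"

definition pauliX :: cmat2 where
  "pauliX i j = (if i = j then 0 else 1)"

definition pauliY :: cmat2 where
  "pauliY i j = (if i = 0 \<and> j = 1 then - \<i> else if i = 1 \<and> j = 0 then \<i> else 0)"

definition pauliZ :: cmat2 where
  "pauliZ i j = (if i = j then (if i = 0 then 1 else -1) else 0)"

definition alice_obs :: "real \<Rightarrow> cmat2" where
  "alice_obs \<phi> i j = complex_of_real (cos \<phi>) * pauliZ i j + complex_of_real (sin \<phi>) * pauliX i j"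

definition alice_eff :: "int \<Rightarrow> real \<Rightarrow> cmat2" where
  "alice_eff a \<phi> i j = (1/2) * (idm i j + of_int a * alice_obs \<phi> i j)"

definition sigma_dot :: "real^3 \<Rightarrow> cmat2" where
  "sigma_dot y i j = complex_of_real (y$1) * pauliX i j + complex_of_real (y$2) * pauliY i j
                    + complex_of_real (y$3) * pauliZ i j"

text \<open>Bob's outcomes: Some 1, Some (-1) (= +1,-1) and None (= no-click, the symbol varnothing).
  B_{b|y} = eta/2 (I + b y.sigma) for b = +-1 and B_{none|y} = (1-eta) I.\<close>
definition bob_eff :: "real \<Rightarrow> int option \<Rightarrow> real^3 \<Rightarrow> cmat2" where
  "bob_eff \<eta> b y i j = (case b of
      Some s \<Rightarrow> complex_of_real (\<eta>/2) * (idm i j + of_int s * sigma_dot y i j)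
    | None \<Rightarrow> complex_of_real (1 - \<eta>) * idm i j)"

definition phi_plus :: "nat \<Rightarrow> nat \<Rightarrow> complex" where
  "phi_plus i j = (if i = j then complex_of_real (1 / sqrt 2) else 0)"

text \<open><Phi+| P (x) Q |Phi+>, with (P (x) Q)_{(ij),(kl)} = P_{ik} Q_{jl}.\<close>
definition phi_plus_expect :: "cmat2 \<Rightarrow> cmat2 \<Rightarrow> complex" where
  "phi_plus_expect P Q = (\<Sum>i<2. \<Sum>j<2. \<Sum>k<2. \<Sum>l<2.
      cnj (phi_plus i j) * P i k * Q j l * phi_plus k l)"

end

theory Submission
  imports Defs
begin

(* The hidden variable is an angle t, uniformly distributed on the circle. Alice answers
   deterministically with the sign of cos (t - phi). Bob, measuring along y, answers s = +-1 with
   probability (pi eta / 2) max 0 (s X) + eta (1 - rho) / 2, where X = y1 sin t + y3 cos t is the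
   component of y along the direction (sin t, 0, cos t) and rho <= 1 is the length of the X-Z part
   of y; eta <= 2/pi is exactly what keeps the no-click probability nonnegative. Writing
   X = rho cos (t - theta), the circle averages that survive are those of |cos (t - theta)| and of
   sgn (cos (t - phi)) cos (t - theta) = 2 cos (phi - theta) / pi; all others vanish because the
   integrand changes sign under t -> t + pi. This reproduces the quantum values
   eta/4 (1 + a s (y3 cos phi + y1 sin phi)) and (1 - eta)/2. *)

lemma interval_integrable_bounded:
  fixes f :: "real \<Rightarrow> real"
  assumes "f \<in> borel_measurable borel" and "\<And>x. \<bar>f x\<bar> \<le> B"
  shows "interval_lebesgue_integrable lborel (ereal a) (ereal b) f"
proof -
  have "integrable lborel (\<lambda>x. indicator {u<..<v} x *\<^sub>R f x)" for u v :: real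
  proof (rule integrableI_bounded_set_indicator[where B=B])
    show "emeasure lborel {u<..<v} < \<infinity>"
      by (cases "u \<le> v") auto
  qed (use assms in auto)
  then show ?thesis
    by (simp add: interval_lebesgue_integrable_def set_integrable_def)
qed

lemma interval_integral_translate:
  fixes f :: "real \<Rightarrow> real" and a b t :: real
  shows "(LBINT x=a+t..b+t. f x) = (LBINT x=a..b. f (x + t))"
proof -
  have "(LBINT x:{a+t<..<b+t}. f x) = (LBINT x:{a<..<b}. f (x + t))" for a b :: real
    unfolding set_lebesgue_integral_def
    by (subst lborel_integral_real_affine[where c=1 and t=t])
       (auto intro!: Bochner_Integration.integral_cong simp: indicator_def algebra_simps)
  then show ?thesis
    by (simp add: interval_lebesgue_integral_def)
qed

lemma interval_integral_periodic_shift: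
  fixes f :: "real \<Rightarrow> real"
  assumes "f \<in> borel_measurable borel" and "\<And>x. \<bar>f x\<bar> \<le> B"
    and periodic: "\<And>x. f (x + p) = f x"
  shows "(LBINT x=ereal a..ereal (a+p). f x) = (LBINT x=ereal b..ereal (b+p). f x)"
proof -
  have sum: "(LBINT x=ereal u..ereal v. f x) + (LBINT x=ereal v..ereal w. f x) = (LBINT x=ereal u..ereal w. f x)" for u v w :: real
    using interval_integral_sum interval_integrable_bounded[OF assms(1,2)] by (metis min_def max_def)
  have "(LBINT x=ereal (b+p)..ereal (a+p). f x) = (LBINT x=ereal b..ereal a. f x)"
    using interval_integral_translate[of b p a f] by (simp add: periodic)
  then show ?thesis
    using sum[of a b "b+p"] sum[of a "b+p" "a+p"] sum[of b a b] by (simp add: add_ac)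
qed

definition circle :: "real measure" where
  "circle = uniform_measure lborel {-pi..pi}"

lemma prob_space_circle: "prob_space circle"
  unfolding circle_def by (rule prob_space_uniform_measure) auto

lemma sets_circle [measurable_cong]: "sets circle = sets borel"
  by (simp add: circle_def)

lemma integral_circle:
  fixes f :: "real \<Rightarrow> real"
  assumes [measurable]: "f \<in> borel_measurable borel"
  shows "integral\<^sup>L circle f = (LBINT x=-pi..pi. f x) / (2*pi)"
proof -
  have density_eq: "circle = density lborel (\<lambda>x. ennreal (indicator {-pi..pi} x / (2*pi)))"
    unfolding circle_def uniform_measure_def
    by (intro arg_cong2[where f=density] refl ext)
       (auto simp: indicator_def divide_ennreal[symmetric])
  have "integral\<^sup>L circle f = (\<integral>x. indicator {-pi..pi} x / (2*pi) * f x \<partial>lborel)"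
    unfolding density_eq by (subst integral_density) auto
  then show ?thesis
    by (simp add: interval_integral_Icc set_lebesgue_integral_def)
qed

lemma integrable_circle:
  fixes f :: "real \<Rightarrow> real"
  assumes "f \<in> borel_measurable borel" and "\<And>x. \<bar>f x\<bar> \<le> B"
  shows "integrable circle f"
proof -
  interpret prob_space circle
    by (rule prob_space_circle)
  show ?thesis
    using assms by (intro integrable_const_bound[where B=B]) auto
qed

lemma integral_circle_translate:
  fixes f :: "real \<Rightarrow> real"
  assumes [measurable]: "f \<in> borel_measurable borel" and "\<And>x. \<bar>f x\<bar> \<le> B"
    and "\<And>x. f (x + 2*pi) = f x"
  shows "(\<integral>x. f (x + c) \<partial>circle) = integral\<^sup>L circle f"
proof -
  have "(LBINT x=-pi..pi. f (x + c)) = (LBINT x=-pi+c..(-pi+c)+2*pi. f x)"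
    using interval_integral_translate[of "-pi" c pi f] by simp
  also have "\<dots> = (LBINT x=-pi..-pi+2*pi. f x)"
    using interval_integral_periodic_shift[OF assms, of "-pi+c" "-pi"] by simp
  finally show ?thesis
    by (simp add: integral_circle)
qed

lemma integral_circle_antiperiodic:
  fixes f :: "real \<Rightarrow> real"
  assumes "f \<in> borel_measurable borel" and "\<And>x. \<bar>f x\<bar> \<le> B"
    and antiperiodic: "\<And>x. f (x + pi) = - f x"
  shows "integral\<^sup>L circle f = 0"
proof -
  have "\<And>x. f (x + 2*pi) = f x"
    using antiperiodic by (metis add.assoc minus_minus mult_2)
  then have "integral\<^sup>L circle f = (\<integral>x. f (x + pi) \<partial>circle)"
    using integral_circle_translate[OF assms(1,2)] by simp
  also have "\<dots> = - integral\<^sup>L circle f"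
    by (simp add: antiperiodic)
  finally show ?thesis
    by simp
qed

lemma interval_integral_cos_add:
  fixes a b d :: real
  assumes "a \<le> b"
  shows "(LBINT x=a..b. cos (x + d)) = sin (b + d) - sin (a + d)"
  using assms
  by (intro interval_integral_FTC_finite)
     (auto intro!: continuous_intros derivative_eq_intros
       simp: has_real_derivative_iff_has_vector_derivative[symmetric])

lemma interval_integral_sgn_cos_mult_cos:
  "(LBINT x=-pi..pi. sgn (cos x) * cos (x + d)) = 4 * cos d"
proof -
  let ?f = "\<lambda>x. sgn (cos x) * cos (x + d)"
  have bounded: "\<bar>?f x\<bar> \<le> 1" for x
    by (simp add: abs_mult abs_sgn_eq)
  have periodic: "?f (x + 2*pi) = ?f x" for x
  proof -
    have "x + 2*pi + d = (x + d) + 2*pi"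
      by simp
    then show ?thesis
      by (simp only: cos_periodic)
  qed
  have "(LBINT x=-pi..pi. ?f x) = (LBINT x=-pi/2..3*pi/2. ?f x)"
    using interval_integral_periodic_shift[of ?f 1 "2*pi" "-pi" "-pi/2"] bounded periodic
    by (simp add: field_simps)
  also have "\<dots> = (LBINT x=-pi/2..pi/2. ?f x) + (LBINT x=pi/2..3*pi/2. ?f x)"
    using interval_integral_sum[of "-pi/2" "pi/2" "3*pi/2" ?f]
      interval_integrable_bounded[of ?f 1] bounded
    by simp
  also have "\<dots> = (LBINT x=-pi/2..pi/2. cos (x + d)) - (LBINT x=pi/2..3*pi/2. cos (x + d))"
  proof -
    have "(LBINT x=-pi/2..pi/2. ?f x) = (LBINT x=-pi/2..pi/2. cos (x + d))"
      by (intro interval_lebesgue_integral_cong) (auto simp: cos_gt_zero_pi)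
    moreover have "cos x < 0" if "pi/2 < x" "x < 3*pi/2" for x
      using cos_gt_zero_pi[of "x - pi"] that by (simp add: cos_diff)
    then have "(LBINT x=pi/2..3*pi/2. ?f x) = (LBINT x=pi/2..3*pi/2. - cos (x + d))"
      by (intro interval_lebesgue_integral_cong) auto
    ultimately show ?thesis
      by (simp add: interval_lebesgue_integral_uminus)
  qed
  also have "\<dots> = 4 * cos d"
  proof -
    have "sin (3*pi/2) = -1" "cos (3*pi/2) = 0"
      using sin_periodic_pi[of "pi/2"] cos_periodic_pi[of "pi/2"] by (simp_all add: field_simps)
    then show ?thesis
      by (simp add: interval_integral_cos_add sin_add sin_diff)
  qed
  finally show ?thesis .
qed

lemma cos_add_pi_diff: "cos (x + pi - c) = - cos (x - c)"
  using cos_periodic_pi[of "x - c"] by (simp add: algebra_simps)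

lemma integral_circle_sgn_cos_mult_cos:
  "(\<integral>x. sgn (cos (x - \<phi>)) * cos (x - \<theta>) \<partial>circle) = 2 * cos (\<phi> - \<theta>) / pi"
proof -
  define g where "g u = sgn (cos u) * cos (u + (\<phi> - \<theta>))" for u
  have "(\<integral>x. sgn (cos (x - \<phi>)) * cos (x - \<theta>) \<partial>circle) = (\<integral>x. g (x + - \<phi>) \<partial>circle)"
    by (simp add: g_def)
  also have "\<dots> = integral\<^sup>L circle g"
  proof (rule integral_circle_translate[where B=1])
    show "\<bar>g x\<bar> \<le> 1" for x
      by (simp add: g_def abs_mult abs_sgn_eq)
    show "g (x + 2*pi) = g x" for x
      using cos_periodic[of "x + (\<phi> - \<theta>)"] by (simp add: g_def add_ac)
  qed (simp add: g_def)
  also have "\<dots> = (LBINT u=-pi..pi. g u) / (2*pi)"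
    by (rule integral_circle) (unfold g_def[abs_def], measurable)
  also have "\<dots> = 2 * cos (\<phi> - \<theta>) / pi"
    using interval_integral_sgn_cos_mult_cos[of "\<phi> - \<theta>"] by (simp add: g_def)
  finally show ?thesis .
qed

lemma integral_circle_response_product:
  "(\<integral>t. (1 + a * sgn (cos (t - \<phi>))) / 2 * (p + q * \<bar>cos (t - \<theta>)\<bar> + r * cos (t - \<theta>)) \<partial>circle)
     = (p + 2 / pi * (q + a * r * cos (\<phi> - \<theta>))) / 2"
proof -
  let ?S = "\<lambda>t. sgn (cos (t - \<phi>))" and ?C = "\<lambda>t. cos (t - \<theta>)"
  have abs_cos: "\<bar>?C t\<bar> = sgn (cos (t - \<theta>)) * ?C t" for t
    by (simp add: abs_sgn)
  have S: "integral\<^sup>L circle ?S = 0"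
    by (rule integral_circle_antiperiodic[where B=1]) (auto simp: abs_sgn_eq cos_add_pi_diff sgn_minus)
  have C: "integral\<^sup>L circle ?C = 0"
    by (rule integral_circle_antiperiodic[where B=1]) (auto simp: cos_add_pi_diff)
  have S_abs_C: "(\<integral>t. ?S t * \<bar>?C t\<bar> \<partial>circle) = 0"
    by (rule integral_circle_antiperiodic[where B=1]) (auto simp: abs_mult abs_sgn_eq cos_add_pi_diff sgn_minus)
  have abs_C: "(\<integral>t. \<bar>?C t\<bar> \<partial>circle) = 2 / pi"
    using integral_circle_sgn_cos_mult_cos[of \<theta> \<theta>] by (simp add: abs_cos)
  have S_C: "(\<integral>t. ?S t * ?C t \<partial>circle) = 2 * cos (\<phi> - \<theta>) / pi"
    by (rule integral_circle_sgn_cos_mult_cos)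
  have integrable: "integrable circle ?S" "integrable circle ?C" "integrable circle (\<lambda>t. \<bar>?C t\<bar>)"
    "integrable circle (\<lambda>t. ?S t * \<bar>?C t\<bar>)" "integrable circle (\<lambda>t. ?S t * ?C t)"
    by (auto intro!: integrable_circle[where B=1] simp: abs_mult abs_sgn_eq)
  interpret prob_space circle
    by (rule prob_space_circle)
  have "(\<integral>t. (1 + a * ?S t) / 2 * (p + q * \<bar>?C t\<bar> + r * ?C t) \<partial>circle)
      = (\<integral>t. p / 2 + q / 2 * \<bar>?C t\<bar> + r / 2 * ?C t + a * p / 2 * ?S t
          + a * q / 2 * (?S t * \<bar>?C t\<bar>) + a * r / 2 * (?S t * ?C t) \<partial>circle)"
    by (simp add: field_simps)
  also have "\<dots> = p / 2 + q / 2 * (2 / pi) + a * r / 2 * (2 * cos (\<phi> - \<theta>) / pi)"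
    by (simp add: integrable S C S_abs_C abs_C S_C prob_space)
  also have "\<dots> = (p + 2 / pi * (q + a * r * cos (\<phi> - \<theta>))) / 2"
    by (simp add: field_simps)
  finally show ?thesis .
qed

lemma sin_cos_polar:
  fixes u v :: real
  obtains \<theta> where "\<And>t. u * sin t + v * cos t = sqrt (u\<^sup>2 + v\<^sup>2) * cos (t - \<theta>)"
proof (cases "u\<^sup>2 + v\<^sup>2 = 0")
  case True
  then show ?thesis
    using that[of 0] by (simp add: add_nonneg_eq_0_iff)
next
  case False
  define r where "r = sqrt (u\<^sup>2 + v\<^sup>2)"
  have "r > 0"
    using False by (simp add: r_def add_pos_nonneg order_le_neq_trans)
  have "(v / r)\<^sup>2 + (u / r)\<^sup>2 = 1"
    using False by (simp add: r_def power_divide add_divide_distrib[symmetric])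
  then obtain \<theta> where "v / r = cos \<theta>" "u / r = sin \<theta>"
    using sincos_total_2pi by metis
  then have "u * sin t + v * cos t = r * cos (t - \<theta>)" for t
    using \<open>r > 0\<close> by (simp add: cos_diff field_simps)
  then show ?thesis
    using that r_def by blast
qed

definition xz_component :: "real^3 \<Rightarrow> real \<Rightarrow> real" where
  "xz_component y t = y$1 * sin t + y$3 * cos t"

definition xz_norm :: "real^3 \<Rightarrow> real" where
  "xz_norm y = sqrt ((y$1)\<^sup>2 + (y$3)\<^sup>2)"

lemma abs_xz_component_le: "\<bar>xz_component y t\<bar> \<le> xz_norm y"
proof -
  obtain \<theta> where "xz_component y t = xz_norm y * cos (t - \<theta>)"
    using sin_cos_polar unfolding xz_component_def xz_norm_def by metis
  then show ?thesis
    by (simp add: abs_mult xz_norm_def mult_left_le)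
qed

lemma xz_norm_le_1:
  assumes "norm y = 1"
  shows "xz_norm y \<le> 1"
proof -
  have "(y$1)\<^sup>2 + (y$2)\<^sup>2 + (y$3)\<^sup>2 = 1"
    using assms by (simp add: norm_eq_sqrt_inner inner_vec_def sum_3 power2_eq_square)
  then have "(y$1)\<^sup>2 + (y$3)\<^sup>2 \<le> 1"
    using zero_le_power2[of "y$2"] by linarith
  then show ?thesis
    unfolding xz_norm_def by simp
qed

definition alice_response :: "real \<Rightarrow> int \<Rightarrow> real^3 \<Rightarrow> real" where
  "alice_response \<phi> a l = (1 + of_int a * sgn (cos (l$1 - \<phi>))) / 2"

definition bob_response :: "real \<Rightarrow> real^3 \<Rightarrow> int option \<Rightarrow> real^3 \<Rightarrow> real" where
  "bob_response \<eta> y b l = (case b of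
      Some s \<Rightarrow> pi * \<eta> / 2 * max 0 (of_int s * xz_component y (l$1)) + \<eta> * (1 - xz_norm y) / 2
    | None \<Rightarrow> 1 - pi * \<eta> / 2 * \<bar>xz_component y (l$1)\<bar> - \<eta> * (1 - xz_norm y))"

(* The hidden angle t is encoded as the point vec t of real^3, recovered as l$1. *)
definition lhv_measure :: "(real^3) measure" where
  "lhv_measure = distr circle borel vec"

lemma borel_measurable_vec [measurable]: "(vec :: real \<Rightarrow> real^'n) \<in> borel_measurable borel"
  unfolding vec_def by (intro borel_measurable_continuous_onI continuous_intros)

lemma prob_space_lhv_measure: "prob_space lhv_measure"
  unfolding lhv_measure_def
  by (intro prob_space.prob_space_distr prob_space_circle) measurable

lemma sets_lhv_measure [measurable_cong]: "sets lhv_measure = sets borel"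
  by (simp add: lhv_measure_def)

lemma integral_lhv_response_product:
  "(\<integral>l. alice_response \<phi> a l * (p + q * \<bar>xz_component y (l$1)\<bar> + r * xz_component y (l$1)) \<partial>lhv_measure)
     = (p + 2 / pi * (q * xz_norm y + of_int a * r * xz_component y \<phi>)) / 2"
proof -
  obtain \<theta> where polar: "\<And>t. xz_component y t = xz_norm y * cos (t - \<theta>)"
    using sin_cos_polar unfolding xz_component_def xz_norm_def by metis
  have "(\<integral>l. alice_response \<phi> a l * (p + q * \<bar>xz_component y (l$1)\<bar> + r * xz_component y (l$1)) \<partial>lhv_measure)
      = (\<integral>t. (1 + of_int a * sgn (cos (t - \<phi>))) / 2
          * (p + q * xz_norm y * \<bar>cos (t - \<theta>)\<bar> + r * xz_norm y * cos (t - \<theta>)) \<partial>circle)"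
    unfolding lhv_measure_def
    by (subst integral_distr)
       (auto simp: alice_response_def polar abs_mult xz_norm_def mult.assoc)
  also have "\<dots> = (p + 2 / pi * (q * xz_norm y + of_int a * r * xz_component y \<phi>)) / 2"
    using integral_circle_response_product[where a="of_int a" and \<phi>=\<phi> and \<theta>=\<theta>
        and q="q * xz_norm y" and r="r * xz_norm y"]
    by (simp add: polar mult_ac)
  finally show ?thesis .
qed

lemma alice_response_bounds:
  assumes "a \<in> {1, -1}"
  shows "0 \<le> alice_response \<phi> a l \<and> alice_response \<phi> a l \<le> 1"
  using assms by (auto simp: alice_response_def sgn_real_def)

lemma alice_response_sum: "alice_response \<phi> 1 l + alice_response \<phi> (-1) l = 1"
  by (simp add: alice_response_def field_simps)

lemma bob_response_bounds:
  assumes "0 \<le> \<eta>" "\<eta> \<le> 2 / pi" and "norm y = 1" and "b \<in> {Some 1, Some (-1), None}"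
  shows "0 \<le> bob_response \<eta> y b l \<and> bob_response \<eta> y b l \<le> 1"
proof -
  define X where "X = xz_component y (l$1)"
  define c where "c = pi * \<eta> / 2"
  have "0 \<le> c" "c \<le> 1"
    using assms(1,2) by (simp_all add: c_def field_simps)
  have "2 / pi \<le> 1"
    using pi_gt3 by simp
  then have "\<eta> \<le> 1"
    using assms(2) by linarith
  have "\<bar>X\<bar> \<le> xz_norm y" "xz_norm y \<le> 1" "0 \<le> xz_norm y"
    using abs_xz_component_le xz_norm_le_1[OF assms(3)] by (simp_all add: X_def xz_norm_def)
  then have "c * \<bar>X\<bar> \<le> xz_norm y" "0 \<le> \<eta> * (1 - xz_norm y)" "\<eta> * (1 - xz_norm y) \<le> 1 - xz_norm y"
    using \<open>0 \<le> c\<close> \<open>c \<le> 1\<close> \<open>\<eta> \<le> 1\<close> assms(1)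
    by (auto intro: order_trans[OF mult_left_le_one_le] mult_left_le_one_le)
  moreover have "0 \<le> c * max 0 X" "c * max 0 X \<le> c * \<bar>X\<bar>" "0 \<le> c * max 0 (- X)" "c * max 0 (- X) \<le> c * \<bar>X\<bar>"
    using \<open>0 \<le> c\<close> by (auto intro: mult_left_mono)
  ultimately show ?thesis
    using assms(4) \<open>0 \<le> c\<close> by (auto simp: bob_response_def X_def[symmetric] c_def[symmetric])
qed

lemma bob_response_sum:
  "bob_response \<eta> y (Some 1) l + bob_response \<eta> y (Some (-1)) l + bob_response \<eta> y None l = 1"
  by (auto simp: bob_response_def max_def algebra_simps)

lemma phi_plus_expect_click:
  "phi_plus_expect (alice_eff a \<phi>) (bob_eff \<eta> (Some s) y)
     = complex_of_real (\<eta> / 4 * (1 + of_int a * of_int s * xz_component y \<phi>))"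
proof -
  have "complex_of_real (sqrt 2) * complex_of_real (sqrt 2) = 2"
    by (simp flip: of_real_mult)
  then show ?thesis
    unfolding phi_plus_expect_def
    by (simp add: numeral_2_eq_2 alice_eff_def alice_obs_def bob_eff_def sigma_dot_def idm_def
        pauliX_def pauliY_def pauliZ_def phi_plus_def xz_component_def algebra_simps)
qed

lemma phi_plus_expect_no_click:
  "phi_plus_expect (alice_eff a \<phi>) (bob_eff \<eta> None y) = complex_of_real ((1 - \<eta>) / 2)"
  unfolding phi_plus_expect_def
  by (simp add: numeral_2_eq_2 alice_eff_def alice_obs_def bob_eff_def sigma_dot_def idm_def
      pauliX_def pauliY_def pauliZ_def phi_plus_def field_simps flip: of_real_mult)

lemma lhv_correlation:
  assumes "b \<in> {Some 1, Some (-1), None}"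
  shows "phi_plus_expect (alice_eff a \<phi>) (bob_eff \<eta> b y)
    = complex_of_real (\<integral>l. alice_response \<phi> a l * bob_response \<eta> y b l \<partial>lhv_measure)"
proof (cases b)
  case None
  have "bob_response \<eta> y None
      = (\<lambda>l. (1 - \<eta> * (1 - xz_norm y)) + - (pi * \<eta> / 2) * \<bar>xz_component y (l$1)\<bar> + 0 * xz_component y (l$1))"
    by (simp add: fun_eq_iff bob_response_def)
  then have "(\<integral>l. alice_response \<phi> a l * bob_response \<eta> y None l \<partial>lhv_measure)
      = ((1 - \<eta> * (1 - xz_norm y)) + 2 / pi * (- (pi * \<eta> / 2) * xz_norm y + of_int a * 0 * xz_component y \<phi>)) / 2"
    by (simp only: integral_lhv_response_product)
  also have "\<dots> = (1 - \<eta>) / 2"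
    by (simp add: field_simps)
  finally show ?thesis
    unfolding None phi_plus_expect_no_click by (simp only:)
next
  case (Some s)
  with assms have "s \<in> {1, -1}"
    by auto
  then have "bob_response \<eta> y (Some s)
      = (\<lambda>l. \<eta> * (1 - xz_norm y) / 2 + pi * \<eta> / 4 * \<bar>xz_component y (l$1)\<bar>
        + pi * \<eta> * of_int s / 4 * xz_component y (l$1))"
    by (auto simp: fun_eq_iff bob_response_def max_def)
  then have "(\<integral>l. alice_response \<phi> a l * bob_response \<eta> y (Some s) l \<partial>lhv_measure)
      = (\<eta> * (1 - xz_norm y) / 2 + 2 / pi * (pi * \<eta> / 4 * xz_norm y
          + of_int a * (pi * \<eta> * of_int s / 4) * xz_component y \<phi>)) / 2"
    by (simp only: integral_lhv_response_product)
  also have "\<dots> = \<eta> / 4 * (1 + of_int a * of_int s * xz_component y \<phi>)"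
    by (simp add: field_simps)
  finally show ?thesis
    unfolding Some phi_plus_expect_click by (simp only:)
qed

theorem mainTheorem14:
  fixes \<eta> :: real
  assumes "0 \<le> \<eta>" and "\<eta> \<le> 2 / pi"
  shows "\<exists>(M :: (real^3) measure) (pA :: real \<Rightarrow> int \<Rightarrow> real^3 \<Rightarrow> real)
            (pB :: real^3 \<Rightarrow> int option \<Rightarrow> real^3 \<Rightarrow> real).
     prob_space M \<and>
     (\<forall>\<phi> a. 0 \<le> \<phi> \<and> \<phi> < 2 * pi \<and> a \<in> {1, -1} \<longrightarrow>
        pA \<phi> a \<in> borel_measurable M \<and> (\<forall>l\<in>space M. 0 \<le> pA \<phi> a l \<and> pA \<phi> a l \<le> 1)) \<and>
     (\<forall>\<phi>. 0 \<le> \<phi> \<and> \<phi> < 2 * pi \<longrightarrow> (\<forall>l\<in>space M. pA \<phi> 1 l + pA \<phi> (-1) l = 1)) \<and>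
     (\<forall>y b. norm y = 1 \<and> b \<in> {Some 1, Some (-1), None} \<longrightarrow>
        pB y b \<in> borel_measurable M \<and> (\<forall>l\<in>space M. 0 \<le> pB y b l \<and> pB y b l \<le> 1)) \<and>
     (\<forall>y. norm y = 1 \<longrightarrow>
        (\<forall>l\<in>space M. pB y (Some 1) l + pB y (Some (-1)) l + pB y None l = 1)) \<and>
     (\<forall>\<phi> y a b. 0 \<le> \<phi> \<and> \<phi> < 2 * pi \<and> norm y = 1 \<and> a \<in> {1, -1} \<and>
        b \<in> {Some 1, Some (-1), None} \<longrightarrow>
        phi_plus_expect (alice_eff a \<phi>) (bob_eff \<eta> b y)
          = complex_of_real (integral\<^sup>L M (\<lambda>l. pA \<phi> a l * pB y b l)))"
proof -
  have "alice_response \<phi> a \<in> borel_measurable lhv_measure" for \<phi> a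
    unfolding alice_response_def by measurable
  moreover have "bob_response \<eta> y b \<in> borel_measurable lhv_measure" for y b
    unfolding bob_response_def xz_component_def by (cases b) simp_all
  ultimately show ?thesis
    using prob_space_lhv_measure alice_response_bounds alice_response_sum
      bob_response_bounds[OF assms] bob_response_sum lhv_correlation
    by (intro exI[of _ lhv_measure] exI[of _ alice_response] exI[of _ "bob_response \<eta>"]
        conjI allI impI ballI) auto
qed

end
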